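(* Let $\mathcal{T}$ be an MPQ-tree of an interval graph $G=(V,E)$, and let $x\ne y$ with $node(x)=node(y)=Q$ a Q-node with sections $S_1,\dots,S_k$. Suppose $x$ and $y$ have exactly one common section $S_i$ in $Q$, and the set $V_i$ of vertices of the subtree $T_i$ induces a clique in $G$ (possibly $V_i=\emptyset$). Then $(x,y)$ is an interval edge.
   Context: Graphs are finite and simple; for $G=(V,E)$ and $e\in E$, $G-e=(V,E\setminus\{e\})$. An edge $(x,y)\in E$ of an interval graph $G$ is an interval edge if $G-(x,y)$ is an interval graph. An MPQ-tree of an interval graph $G=(V,E)$, $V=\{1,\dots,n\}$, is a rooted plane tree whose nodes are P-nodes and Q-nodes. Each P-node carries a (possibly empty) set of vertices. A Q-node has $k\ge 3$ ordered positions $1,\dots,k$; position $i$ carries a set $S_i\subseteq V$ (the $i$-th section) and a child subtree $T_i$, which may be empty. Every vertex $v$ is assigned to exactly one node $node(v)$: either $v$ lies in the set of the P-node $node(v)$, or $node(v)$ is a Q-node and $v$ lies exactly in the sections $S_{l(v)},\dots,S_{r(v)}$ of it, with $l(v)<r(v)$. For a node with child subtrees $T_1,\dots,T_k$, $V_i$ denotes the set of vertices assigned to nodes of $T_i$ ($V_i=\emptyset$ if $T_i$ is empty). The maximal cliques of $G$ are in bijection with the descending paths from the root which at a P-node continue into one of its children (stopping if there is none) and at a Q-node choose a position $i$ and continue into $T_i$ (stopping if $T_i$ is empty); the clique is the union of the sets of the visited P-nodes and the chosen sections. Reading these cliques left to right gives a linear order of the maximal cliques, and the orders obtained this way after arbitrarily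 permuting children of P-nodes and reversing the positions of Q-nodes are exactly the orders of the maximal cliques of $G$ in which the cliques containing any fixed vertex are consecutive. Moreover, for every Q-node with sections $S_1,\dots,S_k$: (a) $V_1\neq\emptyset$ and $V_k\ne\emptyset$; (b) $S_1\subseteq S_2$ and $S_k\subseteq S_{k-1}$; (c) $S_{i-1}\cap S_i\neq\emptyset$ for $2\le i\le k$; (d) $S_{i-1}\neq S_i$ for $2\le i\le k$; (e) $(S_i\cap S_{i+1})\setminus S_1\neq\emptyset$ and $(S_{i-1}\cap S_i)\setminus S_k\neq\emptyset$ for $2\le i\le k-1$; (f) $(S_{i-1}\cup V_{i-1})\setminus S_i\neq\emptyset$ and $(S_i\cup V_i)\setminus S_{i-1}\neq\emptyset$ for $2\le i\le k$; and further (g) no empty P-node has an empty P-node as its parent, (h) no P-node has exactly one child whose root is a P-node, (i) every child subtree of a P-node is nonempty. *)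

theory Defs
  imports Complex_Main "HOL-Library.Multiset"
begin

definition simple_graph :: "nat \<Rightarrow> nat set set \<Rightarrow> bool" where
  "simple_graph n E \<longleftrightarrow> (\<forall>e\<in>E. \<exists>u v. e = {u, v} \<and> u \<noteq> v \<and> u \<in> {1..n} \<and> v \<in> {1..n})"

definition interval_graph :: "nat \<Rightarrow> nat set set \<Rightarrow> bool" where
  "interval_graph n E \<longleftrightarrow> simple_graph n E \<and>
     (\<exists>a b :: nat \<Rightarrow> real. (\<forall>v\<in>{1..n}. a v \<le> b v) \<and>
        (\<forall>u\<in>{1..n}. \<forall>v\<in>{1..n}. u \<noteq> v \<longrightarrow> ({u, v} \<in> E \<longleftrightarrow> a u \<le> b v \<and> a v \<le> b u)))"

definition interval_edge :: "nat \<Rightarrow> nat set set \<Rightarrow> nat \<Rightarrow> nat \<Rightarrow> bool" where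
  "interval_edge n E x y \<longleftrightarrow> {x, y} \<in> E \<and> interval_graph n (E - {{x, y}})"

definition is_clique :: "nat \<Rightarrow> nat set set \<Rightarrow> nat set \<Rightarrow> bool" where
  "is_clique n E C \<longleftrightarrow> C \<subseteq> {1..n} \<and> (\<forall>u\<in>C. \<forall>v\<in>C. u \<noteq> v \<longrightarrow> {u, v} \<in> E)"

definition max_clique :: "nat \<Rightarrow> nat set set \<Rightarrow> nat set \<Rightarrow> bool" where
  "max_clique n E C \<longleftrightarrow> is_clique n E C \<and> (\<forall>D. is_clique n E D \<and> C \<subseteq> D \<longrightarrow> D = C)"

definition consecutive_clique_order :: "nat \<Rightarrow> nat set set \<Rightarrow> nat set list \<Rightarrow> bool" where
  "consecutive_clique_order n E Cs \<longleftrightarrow> distinct Cs \<and> set Cs = {C. max_clique n E C} \<and>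
     (\<forall>v. \<forall>i j k. i \<le> j \<and> j \<le> k \<and> k < length Cs \<and> v \<in> Cs ! i \<and> v \<in> Cs ! k \<longrightarrow> v \<in> Cs ! j)"

text \<open>A P-node carries a vertex set and a list of (nonempty) child subtrees;
a Q-node carries its positions in order: the section S_i and the child subtree T_i,
which may be empty (None).\<close>
datatype mpq = PNode "nat set" "mpq list" | QNode "(nat set \<times> mpq option) list"

fun vset :: "mpq \<Rightarrow> nat set" where
  "vset (PNode S cs) = S \<union> (\<Union>c\<in>set cs. vset c)"
| "vset (QNode ps) = (\<Union>p\<in>set ps. fst p \<union> (case snd p of None \<Rightarrow> {} | Some c \<Rightarrow> vset c))"

definition subvs :: "mpq option \<Rightarrow> nat set" where
  "subvs t = (case t of None \<Rightarrow> {} | Some c \<Rightarrow> vset c)"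

fun own :: "mpq \<Rightarrow> nat set" where
  "own (PNode S cs) = S"
| "own (QNode ps) = (\<Union>p\<in>set ps. fst p)"

text \<open>Node addressed by a path of child indices (0-based).\<close>
fun subtree :: "mpq \<Rightarrow> nat list \<Rightarrow> mpq option" where
  "subtree t [] = Some t"
| "subtree (PNode S cs) (i # p) = (if i < length cs then subtree (cs ! i) p else None)"
| "subtree (QNode ps) (i # p) =
     (if i < length ps then (case snd (ps ! i) of None \<Rightarrow> None | Some c \<Rightarrow> subtree c p) else None)"

fun cliques :: "mpq \<Rightarrow> nat set list" where
  "cliques (PNode S cs) = (if cs = [] then [S] else map ((\<union>) S) (concat (map cliques cs)))"
| "cliques (QNode ps) = concat (map (\<lambda>p. case snd p of None \<Rightarrow> [fst p]
                                   | Some c \<Rightarrow> map ((\<union>) (fst p)) (cliques c)) ps)"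

inductive reord :: "mpq \<Rightarrow> mpq \<Rightarrow> bool" where
  reord_P: "\<lbrakk>length ds = length cs; \<forall>i<length cs. reord (cs ! i) (ds ! i); mset es = mset ds\<rbrakk>
            \<Longrightarrow> reord (PNode S cs) (PNode S es)"
| reord_Q: "\<lbrakk>length qs = length ps;
             \<forall>i<length ps. fst (qs ! i) = fst (ps ! i) \<and>
                ((snd (ps ! i) = None \<and> snd (qs ! i) = None) \<or>
                 (\<exists>c d. snd (ps ! i) = Some c \<and> snd (qs ! i) = Some d \<and> reord c d));
             rs = qs \<or> rs = rev qs\<rbrakk>
            \<Longrightarrow> reord (QNode ps) (QNode rs)"

text \<open>Local well-formedness of a node: Q-node conditions (k >= 3, contiguity of vertices
in sections with l(v) < r(v), and (a)-(f); indices shifted to 0-based), P-node conditions (g), (h);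
(i) holds by construction of the datatype.\<close>
fun node_ok :: "mpq \<Rightarrow> bool" where
  "node_ok (PNode S cs) \<longleftrightarrow>
     (S = {} \<longrightarrow> (\<forall>c\<in>set cs. \<forall>ds. c \<noteq> PNode {} ds)) \<and>
     \<not> (\<exists>S' ds. cs = [PNode S' ds])"
| "node_ok (QNode ps) \<longleftrightarrow>
     (let k = length ps; S = (\<lambda>i. fst (ps ! i)); W = (\<lambda>i. subvs (snd (ps ! i))) in
       k \<ge> 3 \<and>
       (\<forall>v\<in>(\<Union>i<k. S i). \<exists>l r. l < r \<and> r < k \<and> (\<forall>j<k. v \<in> S j \<longleftrightarrow> l \<le> j \<and> j \<le> r)) \<and>
       W 0 \<noteq> {} \<and> W (k - 1) \<noteq> {} \<and>
       S 0 \<subseteq> S 1 \<and> S (k - 1) \<subseteq> S (k - 2) \<and>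
       (\<forall>i. 1 \<le> i \<and> i < k \<longrightarrow> S (i - 1) \<inter> S i \<noteq> {}) \<and>
       (\<forall>i. 1 \<le> i \<and> i < k \<longrightarrow> S (i - 1) \<noteq> S i) \<and>
       (\<forall>i. 1 \<le> i \<and> i \<le> k - 2 \<longrightarrow> (S i \<inter> S (i + 1)) - S 0 \<noteq> {} \<and> (S (i - 1) \<inter> S i) - S (k - 1) \<noteq> {}) \<and>
       (\<forall>i. 1 \<le> i \<and> i < k \<longrightarrow> (S (i - 1) \<union> W (i - 1)) - S i \<noteq> {} \<and> (S i \<union> W i) - S (i - 1) \<noteq> {}))"

definition mpq_tree :: "nat \<Rightarrow> nat set set \<Rightarrow> mpq \<Rightarrow> bool" where
  "mpq_tree n E T \<longleftrightarrow>
     (\<forall>p t. subtree T p = Some t \<longrightarrow> node_ok t) \<and>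
     vset T = {1..n} \<and>
     (\<forall>v\<in>{1..n}. \<exists>!p. \<exists>t. subtree T p = Some t \<and> v \<in> own t) \<and>
     distinct (cliques T) \<and> set (cliques T) = {C. max_clique n E C} \<and>
     {cliques T' | T'. reord T T'} = {Cs. consecutive_clique_order n E Cs}"

end

theory Submission
  imports Defs
begin

text \<open>
  Reading the maximal cliques off the MPQ-tree from left to right gives an order in which the cliques
  containing a vertex v form an interval [lo v, hi v] of positions, and two vertices are adjacent
  iff their intervals meet.  As x and y are carried only by the Q-node, every maximal clique
  containing one of them has the form A \<union> S_j \<union> C', where A consists of the vertices above
  the Q-node and C' is a clique read off T_j.  Since V_i is a clique, A \<union> S_i \<union> V_i is the
  only maximal clique containing both x and y, and since each of x, y lies in a second section,
  each of them has a maximal clique avoiding the other.  Hence the intervals of x and y meet in a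
  single position m, where one ends and the other starts; opening a gap at m separates them and
  changes no other adjacency, which is an interval model of G - (x, y).
\<close>

lemma snds_iff: "c \<in> Basic_BNFs.snds p \<longleftrightarrow> c = snd p"
  by (cases p) auto

lemma bex_set_conv_nth: "(\<exists>x\<in>set xs. P x) \<longleftrightarrow> (\<exists>i<length xs. P (xs ! i))"
  by (metis in_set_conv_nth)

section \<open>Paths and owners in MPQ-trees\<close>

lemma subtree_Cons: "subtree t (k # p) = Option.bind (subtree t [k]) (\<lambda>u. subtree u p)"
  by (cases t) (auto split: option.split)

lemma subtree_append: "subtree t p = Some s \<Longrightarrow> subtree t (p @ r) = subtree s r"
proof (induction p arbitrary: t)
  case (Cons k p)
  from Cons.prems obtain u where "subtree t [k] = Some u" "subtree u p = Some s"
    by (subst (asm) subtree_Cons) (auto split: Option.bind_splits)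
  with Cons.IH show ?case by (subst append_Cons, subst subtree_Cons) simp
qed simp

lemma vset_child_subset: "subtree t [k] = Some u \<Longrightarrow> vset u \<subseteq> vset t"
proof (cases t)
  case (QNode ps)
  moreover assume "subtree t [k] = Some u"
  ultimately have "ps ! k \<in> set ps" "snd (ps ! k) = Some u"
    by (auto split: if_splits option.splits)
  with QNode show ?thesis by force
qed (force split: if_splits)

lemma vset_subtree_subset: "subtree t p = Some s \<Longrightarrow> vset s \<subseteq> vset t"
proof (induction p arbitrary: t)
  case (Cons k p)
  then obtain u where "subtree t [k] = Some u" "subtree u p = Some s"
    by (subst (asm) subtree_Cons) (auto split: Option.bind_splits)
  with Cons.IH show ?case using vset_child_subset by blast
qed simp

lemma own_subset_vset: "own t \<subseteq> vset t"
  by (cases t) auto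

text \<open>In an MPQ-tree this is the singleton of the path to node(v).\<close>

definition owner_paths :: "mpq \<Rightarrow> nat \<Rightarrow> nat list set" where
  "owner_paths t v = {p. \<exists>s. subtree t p = Some s \<and> v \<in> own s}"

lemma Nil_in_owner_paths: "v \<in> own t \<Longrightarrow> [] \<in> owner_paths t v"
  by (simp add: owner_paths_def)

lemma append_in_owner_paths:
  "subtree t p = Some s \<Longrightarrow> p' \<in> owner_paths s v \<Longrightarrow> p @ p' \<in> owner_paths t v"
  by (auto simp: owner_paths_def subtree_append)

lemma owner_paths_nonempty: "v \<in> vset t \<Longrightarrow> owner_paths t v \<noteq> {}"
proof (induction t)
  case (PNode S cs)
  show ?case
  proof (cases "v \<in> S")
    case False
    with PNode.prems obtain k where k: "k < length cs" "v \<in> vset (cs ! k)"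
      by (auto simp: in_set_conv_nth)
    with PNode.IH obtain p where "p \<in> owner_paths (cs ! k) v" by fastforce
    with k have "[k] @ p \<in> owner_paths (PNode S cs) v" by (intro append_in_owner_paths) auto
    then show ?thesis by blast
  qed (use Nil_in_owner_paths[of v "PNode S cs"] in auto)
next
  case (QNode ps)
  show ?case
  proof (cases "v \<in> own (QNode ps)")
    case False
    with QNode.prems obtain k c where k: "k < length ps" "snd (ps ! k) = Some c" "v \<in> vset c"
      by (auto simp: in_set_conv_nth split: option.splits)
    with QNode.IH[of "ps ! k" "Some c" c] obtain p where "p \<in> owner_paths c v"
      by (auto simp: snds_iff)
    with k have "[k] @ p \<in> owner_paths (QNode ps) v" by (intro append_in_owner_paths) auto
    then show ?thesis by blast
  qed (use Nil_in_owner_paths[of v "QNode ps"] in auto)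
qed

lemma owner_paths_below:
  assumes "subtree t p = Some s" "v \<in> vset s"
  obtains p' where "p @ p' \<in> owner_paths t v"
  using owner_paths_nonempty[OF assms(2)] append_in_owner_paths[OF assms(1)] by blast

section \<open>Cliques read off an MPQ-tree\<close>

lemma cliques_subset_vset: "C \<in> set (cliques t) \<Longrightarrow> C \<subseteq> vset t"
proof (induction t arbitrary: C)
  case (QNode ps)
  then obtain p where p: "p \<in> set ps"
    "C \<in> set (case snd p of None \<Rightarrow> [fst p] | Some c \<Rightarrow> map ((\<union>) (fst p)) (cliques c))"
    by auto
  show ?case
  proof (cases "snd p")
    case (Some c)
    with p obtain C' where "C = fst p \<union> C'" "C' \<in> set (cliques c)" by auto
    with QNode.IH[of p "Some c" c] Some p(1) show ?thesis
      by (force simp: snds_iff)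
  qed (use p in auto)
qed (auto split: if_splits)

lemma mem_cliques_PNode:
  "cs \<noteq> [] \<Longrightarrow> C \<in> set (cliques (PNode S cs)) \<longleftrightarrow>
     (\<exists>k<length cs. \<exists>C'\<in>set (cliques (cs ! k)). C = S \<union> C')"
proof -
  assume "cs \<noteq> []"
  then have "C \<in> set (cliques (PNode S cs)) \<longleftrightarrow> (\<exists>c\<in>set cs. \<exists>C'\<in>set (cliques c). C = S \<union> C')"
    by auto
  also have "\<dots> \<longleftrightarrow> (\<exists>k<length cs. \<exists>C'\<in>set (cliques (cs ! k)). C = S \<union> C')"
    by (rule bex_set_conv_nth)
  finally show ?thesis .
qed

lemma PNode_clique_at_child:
  assumes "k < length cs" "C' \<in> set (cliques (cs ! k))"
  shows "S \<union> C' \<in> set (cliques (PNode S cs))"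
proof -
  from assms have "C' \<in> set (concat (map cliques cs))" by (auto dest: nth_mem)
  with assms(1) show ?thesis by auto
qed

lemma mem_cliques_QNode:
  "C \<in> set (cliques (QNode ps)) \<longleftrightarrow>
     (\<exists>k<length ps. case snd (ps ! k) of None \<Rightarrow> C = fst (ps ! k)
                     | Some c \<Rightarrow> (\<exists>C'\<in>set (cliques c). C = fst (ps ! k) \<union> C'))"
proof -
  have at: "C \<in> set (case po of None \<Rightarrow> [a] | Some c \<Rightarrow> map ((\<union>) a) (cliques c)) \<longleftrightarrow>
      (case po of None \<Rightarrow> C = a | Some c \<Rightarrow> (\<exists>C'\<in>set (cliques c). C = a \<union> C'))" for po a
    by (cases po) auto
  let ?at = "\<lambda>p. case snd p of None \<Rightarrow> [fst p] | Some c \<Rightarrow> map ((\<union>) (fst p)) (cliques c)"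
  have "C \<in> set (cliques (QNode ps)) \<longleftrightarrow> (\<exists>p\<in>set ps. C \<in> set (?at p))"
    by simp
  also have "\<dots> \<longleftrightarrow> (\<exists>k<length ps. C \<in> set (?at (ps ! k)))"
    by (rule bex_set_conv_nth)
  finally show ?thesis
    by (simp only: at)
qed

lemma QNode_clique_at_leaf:
  "k < length ps \<Longrightarrow> snd (ps ! k) = None \<Longrightarrow> fst (ps ! k) \<in> set (cliques (QNode ps))"
  unfolding mem_cliques_QNode by (intro exI[of _ k]) auto

lemma QNode_clique_at_child:
  "k < length ps \<Longrightarrow> snd (ps ! k) = Some c \<Longrightarrow> C' \<in> set (cliques c) \<Longrightarrow>
     fst (ps ! k) \<union> C' \<in> set (cliques (QNode ps))"
  unfolding mem_cliques_QNode by (intro exI[of _ k]) auto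

lemma QNode_clique_position:
  assumes "C \<in> set (cliques (QNode ps))"
  obtains k where "k < length ps" "fst (ps ! k) \<subseteq> C" "C \<subseteq> fst (ps ! k) \<union> subvs (snd (ps ! k))"
proof -
  from assms obtain k where k: "k < length ps" and at: "case snd (ps ! k) of None \<Rightarrow> C = fst (ps ! k)
      | Some c \<Rightarrow> (\<exists>C'\<in>set (cliques c). C = fst (ps ! k) \<union> C')"
    unfolding mem_cliques_QNode by blast
  show thesis
  proof (cases "snd (ps ! k)")
    case None
    with at show thesis by (intro that[OF k]) (auto simp: subvs_def)
  next
    case (Some c)
    with at obtain C' where "C' \<in> set (cliques c)" "C = fst (ps ! k) \<union> C'" by auto
    with Some show thesis by (intro that[OF k]) (auto simp: subvs_def dest: cliques_subset_vset)
  qed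
qed

definition nodes_ok :: "mpq \<Rightarrow> bool" where
  "nodes_ok t \<longleftrightarrow> (\<forall>p s. subtree t p = Some s \<longrightarrow> node_ok s)"

lemma nodes_ok_subtree: "nodes_ok t \<Longrightarrow> subtree t p = Some s \<Longrightarrow> nodes_ok s"
  unfolding nodes_ok_def by (metis subtree_append)

lemma nodes_ok_node_ok: "nodes_ok t \<Longrightarrow> node_ok t"
  unfolding nodes_ok_def by (metis subtree.simps(1))

lemma node_ok_QNode_length: "node_ok (QNode ps) \<Longrightarrow> 3 \<le> length ps"
  by (simp add: Let_def)

lemma cliques_nonempty: "nodes_ok t \<Longrightarrow> cliques t \<noteq> []"
proof (induction t)
  case (QNode ps)
  have ps: "ps \<noteq> []"
    using node_ok_QNode_length[OF nodes_ok_node_ok[OF QNode.prems]] by auto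
  show ?case
  proof (cases "snd (ps ! 0)")
    case None
    with ps have "fst (ps ! 0) \<in> set (cliques (QNode ps))" by (intro QNode_clique_at_leaf) auto
    then show ?thesis by (auto simp del: cliques.simps)
  next
    case (Some c)
    with ps have "subtree (QNode ps) [0] = Some c" by simp
    with QNode.prems have "nodes_ok c" by (rule nodes_ok_subtree)
    with QNode.IH[of "ps ! 0" "Some c" c] Some ps have "cliques c \<noteq> []"
      by (simp add: snds_iff)
    then obtain C' where "C' \<in> set (cliques c)" using last_in_set by blast
    with Some ps have "fst (ps ! 0) \<union> C' \<in> set (cliques (QNode ps))" by (intro QNode_clique_at_child) auto
    then show ?thesis by (auto simp del: cliques.simps)
  qed
next
  case (PNode S cs)
  show ?case
  proof (cases cs)
    case (Cons c cs')
    then have "subtree (PNode S cs) [0] = Some c" by simp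
    with PNode.prems have "nodes_ok c" by (rule nodes_ok_subtree)
    with PNode.IH Cons show ?thesis by auto
  qed simp
qed

text \<open>The child is only required to satisfy the conclusions of cliques_nonempty and
  vset_subset_cliques, so that the lemma can be used inside the induction proving the latter.\<close>

lemma QNode_clique_through_covered:
  assumes "k < length ps" "w \<in> fst (ps ! k) \<union> subvs (snd (ps ! k))"
    and child: "\<And>c. snd (ps ! k) = Some c \<Longrightarrow> cliques c \<noteq> [] \<and> vset c \<subseteq> \<Union>(set (cliques c))"
  obtains C where "C \<in> set (cliques (QNode ps))" "w \<in> C"
    "fst (ps ! k) \<subseteq> C" "C \<subseteq> fst (ps ! k) \<union> subvs (snd (ps ! k))"
proof (cases "snd (ps ! k)")
  case None
  with assms(1) have "fst (ps ! k) \<in> set (cliques (QNode ps))" by (rule QNode_clique_at_leaf)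
  with assms(2) None show thesis by (intro that) (auto simp: subvs_def simp del: cliques.simps)
next
  case (Some c)
  have "\<exists>C'\<in>set (cliques c). w \<in> fst (ps ! k) \<union> C'"
  proof (cases "w \<in> fst (ps ! k)")
    case True
    then show ?thesis using child[OF Some] last_in_set by blast
  next
    case False
    with assms(2) Some have "w \<in> vset c" by (simp add: subvs_def)
    then show ?thesis using child[OF Some] by blast
  qed
  then obtain C' where C': "C' \<in> set (cliques c)" "w \<in> fst (ps ! k) \<union> C'" ..
  from assms(1) Some C'(1) have "fst (ps ! k) \<union> C' \<in> set (cliques (QNode ps))"
    by (rule QNode_clique_at_child)
  with C' Some show thesis
    by (intro that) (auto simp: subvs_def dest: cliques_subset_vset simp del: cliques.simps)
qed

lemma vset_subset_cliques: "nodes_ok t \<Longrightarrow> vset t \<subseteq> \<Union>(set (cliques t))"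
proof (induction t)
  case (PNode S cs)
  show ?case
  proof
    fix v assume "v \<in> vset (PNode S cs)"
    show "v \<in> \<Union>(set (cliques (PNode S cs)))"
    proof (cases "cs = []")
      case False
      obtain k where k: "k < length cs" and v: "v \<in> S \<or> v \<in> vset (cs ! k)"
        using \<open>v \<in> vset (PNode S cs)\<close> False by (auto simp: in_set_conv_nth)
      have "subtree (PNode S cs) [k] = Some (cs ! k)" using k by simp
      with PNode.prems have ok: "nodes_ok (cs ! k)" by (rule nodes_ok_subtree)
      have "\<exists>C'\<in>set (cliques (cs ! k)). v \<in> S \<union> C'"
        using v cliques_nonempty[OF ok] last_in_set PNode.IH[OF nth_mem[OF k] ok] by blast
      with k show ?thesis using PNode_clique_at_child by blast
    qed (use \<open>v \<in> vset (PNode S cs)\<close> in auto)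
  qed
next
  case (QNode ps)
  show ?case
  proof
    fix v assume "v \<in> vset (QNode ps)"
    then obtain k where k: "k < length ps" and v: "v \<in> fst (ps ! k) \<union> subvs (snd (ps ! k))"
      by (auto simp: in_set_conv_nth subvs_def split: option.splits)
    have "cliques c \<noteq> [] \<and> vset c \<subseteq> \<Union>(set (cliques c))" if c: "snd (ps ! k) = Some c" for c
    proof -
      from k c have "subtree (QNode ps) [k] = Some c" by simp
      with QNode.prems have "nodes_ok c" by (rule nodes_ok_subtree)
      with QNode.IH[of "ps ! k" "Some c" c] k c show ?thesis
        by (simp add: snds_iff cliques_nonempty)
    qed
    with k v obtain C where "C \<in> set (cliques (QNode ps))" "v \<in> C"
      by (rule QNode_clique_through_covered)
    then show "v \<in> \<Union>(set (cliques (QNode ps)))" by blast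
  qed
qed

lemma QNode_clique_through:
  assumes "nodes_ok (QNode ps)" "k < length ps" "w \<in> fst (ps ! k) \<union> subvs (snd (ps ! k))"
  obtains C where "C \<in> set (cliques (QNode ps))" "w \<in> C"
    "fst (ps ! k) \<subseteq> C" "C \<subseteq> fst (ps ! k) \<union> subvs (snd (ps ! k))"
proof (rule QNode_clique_through_covered[OF assms(2,3)])
  fix c assume "snd (ps ! k) = Some c"
  with assms(2) have "subtree (QNode ps) [k] = Some c" by simp
  with assms(1) have "nodes_ok c" by (rule nodes_ok_subtree)
  then show "cliques c \<noteq> [] \<and> vset c \<subseteq> \<Union>(set (cliques c))"
    by (simp add: cliques_nonempty vset_subset_cliques)
qed (rule that)

text \<open>What a clique of t gains at t when it continues into the k-th child: the set of the P-node,
  or the k-th section of the Q-node.\<close>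

definition section_at :: "mpq \<Rightarrow> nat \<Rightarrow> nat set" where
  "section_at t k = (case t of PNode S cs \<Rightarrow> S | QNode ps \<Rightarrow> fst (ps ! k))"

lemma section_at_subset_own: "subtree t [k] = Some u \<Longrightarrow> section_at t k \<subseteq> own t"
  by (cases t) (auto simp: section_at_def split: if_splits option.splits dest: nth_mem)

lemma clique_through_child:
  "subtree t [k] = Some u \<Longrightarrow> C' \<in> set (cliques u) \<Longrightarrow> section_at t k \<union> C' \<in> set (cliques t)"
  by (cases t) (auto simp: section_at_def split: if_splits option.splits
      simp del: cliques.simps intro: PNode_clique_at_child QNode_clique_at_child)

lemma cliques_cases:
  assumes "C \<in> set (cliques t)"
  obtains "C \<subseteq> own t"
  | j u C' where "subtree t [j] = Some u" "C' \<in> set (cliques u)" "C = section_at t j \<union> C'"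
proof (cases t)
  case (PNode S cs)
  show thesis
  proof (cases "cs = []")
    case False
    with assms PNode obtain j C' where "j < length cs" "C' \<in> set (cliques (cs ! j))" "C = S \<union> C'"
      using mem_cliques_PNode by blast
    with PNode show thesis by (intro that(2)) (auto simp: section_at_def)
  qed (use assms PNode that(1) in auto)
next
  case (QNode ps)
  with assms obtain j where j: "j < length ps" and at: "case snd (ps ! j) of None \<Rightarrow> C = fst (ps ! j)
      | Some c \<Rightarrow> (\<exists>C'\<in>set (cliques c). C = fst (ps ! j) \<union> C')"
    using mem_cliques_QNode by blast
  show thesis
  proof (cases "snd (ps ! j)")
    case None
    with at j QNode show thesis by (intro that(1)) (auto dest: nth_mem)
  next
    case (Some c)
    with at obtain C' where "C' \<in> set (cliques c)" "C = fst (ps ! j) \<union> C'" by auto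
    with Some j QNode show thesis by (intro that(2)[of j c C']) (auto simp: section_at_def)
  qed
qed

lemma clique_through_child_or_elsewhere:
  assumes "subtree t [k] = Some u" "C \<in> set (cliques t)"
  shows "(\<exists>C'\<in>set (cliques u). C = section_at t k \<union> C') \<or>
    (\<forall>v\<in>C. v \<in> own t \<or> (\<exists>j u'. j \<noteq> k \<and> subtree t [j] = Some u' \<and> v \<in> vset u'))"
  using assms(2)
proof (cases rule: cliques_cases)
  case (2 j u' C')
  show ?thesis
  proof (cases "j = k")
    case True
    with 2 assms(1) show ?thesis by auto
  next
    case False
    with 2 show ?thesis using section_at_subset_own[OF 2(1)] cliques_subset_vset[OF 2(2)] by blast
  qed
qed blast

text \<open>A is the set of vertices carried by the nodes strictly above s on the path p.\<close>

lemma cliques_through_path: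
  assumes "subtree t p = Some s"
  obtains A where "\<And>v. v \<in> A \<Longrightarrow> \<not> owner_paths t v \<subseteq> {p}"
    and "\<And>C'. C' \<in> set (cliques s) \<Longrightarrow> A \<union> C' \<in> set (cliques t)"
    and "\<And>C v. C \<in> set (cliques t) \<Longrightarrow> v \<in> C \<Longrightarrow> owner_paths t v \<subseteq> {p} \<Longrightarrow>
           \<exists>C'\<in>set (cliques s). C = A \<union> C'"
  using assms
proof (induction p arbitrary: t thesis)
  case Nil
  then show ?case by (intro Nil.prems(1)[of "{}"]) auto
next
  case (Cons k p)
  from Cons.prems(2) obtain u where u: "subtree t [k] = Some u" "subtree u p = Some s"
    by (subst (asm) subtree_Cons) (auto split: Option.bind_splits)
  obtain A where A_away: "\<And>v. v \<in> A \<Longrightarrow> \<not> owner_paths u v \<subseteq> {p}"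
    and A_ext: "\<And>C'. C' \<in> set (cliques s) \<Longrightarrow> A \<union> C' \<in> set (cliques u)"
    and A_all: "\<And>C v. C \<in> set (cliques u) \<Longrightarrow> v \<in> C \<Longrightarrow> owner_paths u v \<subseteq> {p} \<Longrightarrow>
           \<exists>C'\<in>set (cliques s). C = A \<union> C'"
    using Cons.IH[OF _ u(2)] by blast
  let ?B = "section_at t k"
  have B_own: "?B \<subseteq> own t" by (rule section_at_subset_own[OF u(1)])
  have lift: "k # p' \<in> owner_paths t v" if "p' \<in> owner_paths u v" for p' v
    using append_in_owner_paths[OF u(1) that] by simp
  show ?case
  proof (rule Cons.prems(1)[of "?B \<union> A"])
    fix v assume "v \<in> ?B \<union> A"
    then show "\<not> owner_paths t v \<subseteq> {k # p}"
    proof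
      assume "v \<in> ?B"
      with B_own have "[] \<in> owner_paths t v" by (blast intro: Nil_in_owner_paths)
      then show ?thesis by blast
    next
      assume "v \<in> A"
      then obtain p' where "p' \<in> owner_paths u v" "p' \<noteq> p" using A_away by blast
      with lift show ?thesis by blast
    qed
  next
    fix C' assume "C' \<in> set (cliques s)"
    then show "?B \<union> A \<union> C' \<in> set (cliques t)"
      using A_ext clique_through_child[OF u(1)] by (simp add: Un_assoc)
  next
    fix C v assume C: "C \<in> set (cliques t)" "v \<in> C" and v: "owner_paths t v \<subseteq> {k # p}"
    have "v \<notin> own t" using v Nil_in_owner_paths by blast
    moreover have "v \<notin> vset u'" if j: "j \<noteq> k" and u': "subtree t [j] = Some u'" for j u'
    proof
      assume "v \<in> vset u'"
      then obtain p' where "[j] @ p' \<in> owner_paths t v" by (rule owner_paths_below[OF u'])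
      with v j show False by auto
    qed
    ultimately obtain C' where C': "C' \<in> set (cliques u)" "C = ?B \<union> C'"
      using clique_through_child_or_elsewhere[OF u(1) C(1)] C(2) by blast
    have "v \<in> C'" using C' C(2) B_own \<open>v \<notin> own t\<close> by blast
    moreover have "owner_paths u v \<subseteq> {p}" using v lift by blast
    ultimately obtain C'' where "C'' \<in> set (cliques s)" "C' = A \<union> C''" using A_all[OF C'(1)] by blast
    with C'(2) show "\<exists>C''\<in>set (cliques s). C = ?B \<union> A \<union> C''" by (auto simp: Un_assoc)
  qed
qed

section \<open>Consecutive clique orders and interval models\<close>

lemma max_clique_extension:
  assumes "is_clique n E C"
  obtains D where "max_clique n E D" "C \<subseteq> D"
proof -
  have "finite {D. is_clique n E D}"
    by (rule finite_subset[of _ "Pow {1..n}"]) (auto simp: is_clique_def)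
  then obtain D where "is_clique n E D" "C \<subseteq> D"
      "\<forall>D'\<in>{D. is_clique n E D}. D \<subseteq> D' \<longrightarrow> D = D'"
    using finite_has_maximal2[of "{D. is_clique n E D}" C] assms by auto
  then show thesis by (intro that) (auto simp: max_clique_def)
qed

lemma max_clique_is_clique: "max_clique n E C \<Longrightarrow> is_clique n E C"
  by (simp add: max_clique_def)

lemma max_clique_subset: "max_clique n E C \<Longrightarrow> C \<subseteq> {1..n}"
  by (simp add: max_clique_def is_clique_def)

lemma max_clique_edge: "max_clique n E C \<Longrightarrow> u \<in> C \<Longrightarrow> v \<in> C \<Longrightarrow> u \<noteq> v \<Longrightarrow> {u, v} \<in> E"
  by (simp add: max_clique_def is_clique_def)

lemma max_clique_maximal: "max_clique n E C \<Longrightarrow> is_clique n E D \<Longrightarrow> C \<subseteq> D \<Longrightarrow> D = C"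
  by (simp add: max_clique_def)

lemma is_clique_if_cliques_cover:
  assumes "is_clique n E V"
    and cover: "\<And>w. w \<in> D \<Longrightarrow> \<exists>K. is_clique n E K \<and> w \<in> K \<and> D - V \<subseteq> K"
  shows "is_clique n E D"
  unfolding is_clique_def
proof (intro conjI ballI impI)
  show "D \<subseteq> {1..n}"
  proof
    fix w assume "w \<in> D"
    with cover obtain K where "is_clique n E K" "w \<in> K" by blast
    then show "w \<in> {1..n}" by (auto simp: is_clique_def)
  qed
  fix w1 w2 assume w: "w1 \<in> D" "w2 \<in> D" "w1 \<noteq> w2"
  have "\<exists>K. is_clique n E K \<and> w1 \<in> K \<and> w2 \<in> K"
  proof (cases "w1 \<in> V")
    case True
    show ?thesis
    proof (cases "w2 \<in> V")
      case False
      with w(2) cover[OF w(1)] show ?thesis by blast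
    qed (use assms(1) True in blast)
  next
    case False
    with w(1) cover[OF w(2)] show ?thesis by blast
  qed
  with w(3) show "{w1, w2} \<in> E" by (auto simp: is_clique_def)
qed

lemma edge_iff_in_max_clique:
  assumes "u \<noteq> v" "u \<in> {1..n}" "v \<in> {1..n}"
  shows "{u, v} \<in> E \<longleftrightarrow> (\<exists>D. max_clique n E D \<and> u \<in> D \<and> v \<in> D)"
proof
  assume "{u, v} \<in> E"
  with assms have "is_clique n E {u, v}" by (auto simp: is_clique_def insert_commute)
  then show "\<exists>D. max_clique n E D \<and> u \<in> D \<and> v \<in> D"
    by (metis insert_subset max_clique_extension)
qed (use assms max_clique_edge in blast)

lemma vertex_in_max_clique:
  assumes "v \<in> {1..n}"
  obtains D where "max_clique n E D" "v \<in> D"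
proof -
  from assms have "is_clique n E {v}" by (simp add: is_clique_def)
  then show thesis by (metis insert_subset max_clique_extension that)
qed

lemma consecutive_clique_order_intervals:
  assumes "consecutive_clique_order n E Cs"
  obtains lo hi :: "nat \<Rightarrow> nat" where
    "\<And>v. v \<in> {1..n} \<Longrightarrow> lo v \<le> hi v \<and> hi v < length Cs"
    and "\<And>v j. v \<in> {1..n} \<Longrightarrow> j < length Cs \<Longrightarrow> v \<in> Cs ! j \<longleftrightarrow> lo v \<le> j \<and> j \<le> hi v"
    and "\<And>u v. u \<in> {1..n} \<Longrightarrow> v \<in> {1..n} \<Longrightarrow> u \<noteq> v \<Longrightarrow>
           {u, v} \<in> E \<longleftrightarrow> lo u \<le> hi v \<and> lo v \<le> hi u"
proof -
  have set_Cs: "set Cs = {C. max_clique n E C}"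
    and convex: "\<And>v i j k. i \<le> j \<Longrightarrow> j \<le> k \<Longrightarrow> k < length Cs \<Longrightarrow> v \<in> Cs ! i \<Longrightarrow> v \<in> Cs ! k \<Longrightarrow> v \<in> Cs ! j"
    using assms unfolding consecutive_clique_order_def by blast+
  define I where "I v = {j. j < length Cs \<and> v \<in> Cs ! j}" for v
  define lo where "lo v = Min (I v)" for v
  define hi where "hi v = Max (I v)" for v
  have fin: "finite (I v)" for v unfolding I_def by auto
  have ne: "I v \<noteq> {}" if v: "v \<in> {1..n}" for v
  proof -
    obtain D where "max_clique n E D" "v \<in> D" using vertex_in_max_clique[OF v] .
    moreover from \<open>max_clique n E D\<close> set_Cs obtain j where "j < length Cs" "Cs ! j = D"
      by (metis in_set_conv_nth mem_Collect_eq)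
    ultimately show ?thesis unfolding I_def by blast
  qed
  have ends: "lo v \<in> I v" "hi v \<in> I v" if "v \<in> {1..n}" for v
    unfolding lo_def hi_def using fin ne[OF that] by auto
  have mem: "v \<in> Cs ! j \<longleftrightarrow> lo v \<le> j \<and> j \<le> hi v" if "v \<in> {1..n}" "j < length Cs" for v j
  proof
    assume "v \<in> Cs ! j"
    with that fin show "lo v \<le> j \<and> j \<le> hi v" unfolding lo_def hi_def I_def by auto
  next
    assume "lo v \<le> j \<and> j \<le> hi v"
    with ends[OF that(1)] show "v \<in> Cs ! j" unfolding I_def by (blast intro: convex)
  qed
  have bounds: "lo v \<le> hi v \<and> hi v < length Cs" if "v \<in> {1..n}" for v
    using ends[OF that] fin unfolding lo_def hi_def I_def by auto
  show thesis
  proof (rule that[of lo hi, OF bounds mem])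
    fix u v assume u: "u \<in> {1..n}" and v: "v \<in> {1..n}" and uv: "u \<noteq> v"
    have "(\<exists>D. max_clique n E D \<and> u \<in> D \<and> v \<in> D) \<longleftrightarrow> (\<exists>D\<in>set Cs. u \<in> D \<and> v \<in> D)"
      using set_Cs by auto
    also have "\<dots> \<longleftrightarrow> (\<exists>j<length Cs. u \<in> Cs ! j \<and> v \<in> Cs ! j)"
      by (rule bex_set_conv_nth)
    also have "\<dots> \<longleftrightarrow> lo u \<le> hi v \<and> lo v \<le> hi u"
      using mem[OF u] mem[OF v] bounds[OF u] bounds[OF v]
      by (auto intro!: exI[of _ "max (lo u) (lo v)"])
    finally show "{u, v} \<in> E \<longleftrightarrow> lo u \<le> hi v \<and> lo v \<le> hi u"
      using edge_iff_in_max_clique[OF uv u v] by simp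
  qed
qed

lemma interval_graph_remove_touching_edge:
  fixes lo hi :: "nat \<Rightarrow> nat"
  assumes "simple_graph n E"
    and lo_hi: "\<forall>v\<in>{1..n}. lo v \<le> hi v"
    and edges: "\<forall>u\<in>{1..n}. \<forall>v\<in>{1..n}. u \<noteq> v \<longrightarrow> ({u, v} \<in> E \<longleftrightarrow> lo u \<le> hi v \<and> lo v \<le> hi u)"
    and "x \<noteq> y" and touch: "hi x = lo y"
  shows "interval_graph n (E - {{x, y}})"
proof -
  \<comment> \<open>Open a unit gap at the touching point m: x now ends at m and y starts at m + 1.\<close>
  define m where "m = lo y"
  define a where "a v = real (if v = y then m + 1 else if lo v \<le> m then lo v else lo v + 1)" for v
  define b where "b v = real (if v = x then m else if hi v < m then hi v else hi v + 1)" for v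
  have shift: "a u \<le> b v \<longleftrightarrow> lo u \<le> hi v" if "\<not> (u = y \<and> v = x)" for u v
    using that touch \<open>x \<noteq> y\<close> unfolding a_def b_def m_def by auto
  have "a v \<le> b v" if "v \<in> {1..n}" for v
    using shift[of v v] lo_hi that \<open>x \<noteq> y\<close> by auto
  moreover have "{u, v} \<in> E - {{x, y}} \<longleftrightarrow> a u \<le> b v \<and> a v \<le> b u"
    if "u \<in> {1..n}" "v \<in> {1..n}" "u \<noteq> v" for u v
  proof (cases "{u, v} = {x, y}")
    case True
    moreover have "\<not> a y \<le> b x" unfolding a_def b_def using \<open>x \<noteq> y\<close> by simp
    ultimately show ?thesis by (auto simp: doubleton_eq_iff)
  next
    case False
    then have "\<not> (u = y \<and> v = x)" "\<not> (v = y \<and> u = x)" by auto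
    with edges that False show ?thesis by (simp add: shift)
  qed
  moreover have "simple_graph n (E - {{x, y}})" using assms(1) by (auto simp: simple_graph_def)
  ultimately show ?thesis unfolding interval_graph_def by blast
qed

lemma nat_intervals_touch:
  fixes a b a' b' m :: nat
  assumes meet: "\<And>j. a \<le> j \<and> j \<le> b \<and> a' \<le> j \<and> j \<le> b' \<longleftrightarrow> j = m"
    and "a \<le> j" "j \<le> b" "\<not> (a' \<le> j \<and> j \<le> b')"
    and "a' \<le> j'" "j' \<le> b'" "\<not> (a \<le> j' \<and> j' \<le> b)"
  shows "b = a' \<or> b' = a"
proof -
  from meet[of m] have m: "a \<le> m" "m \<le> b" "a' \<le> m" "m \<le> b'" by simp_all
  with meet[of "max a a'"] meet[of "min b b'"] have "max a a' = m" "min b b' = m" by simp_all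
  with assms(2-7) show ?thesis by (auto simp: max_def min_def split: if_splits)
qed

lemma interval_edge_if_unique_common_max_clique:
  assumes "simple_graph n E" and order: "consecutive_clique_order n E Cs"
    and common: "\<exists>!C. max_clique n E C \<and> x \<in> C \<and> y \<in> C"
    and x_only: "\<exists>C. max_clique n E C \<and> x \<in> C \<and> y \<notin> C"
    and y_only: "\<exists>C. max_clique n E C \<and> y \<in> C \<and> x \<notin> C"
  shows "interval_edge n E x y"
proof -
  obtain lo hi where bounds: "\<And>v. v \<in> {1..n} \<Longrightarrow> lo v \<le> hi v \<and> hi v < length Cs"
    and mem: "\<And>v j. v \<in> {1..n} \<Longrightarrow> j < length Cs \<Longrightarrow> v \<in> Cs ! j \<longleftrightarrow> lo v \<le> j \<and> j \<le> hi v"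
    and edges: "\<And>u v. u \<in> {1..n} \<Longrightarrow> v \<in> {1..n} \<Longrightarrow> u \<noteq> v \<Longrightarrow>
           {u, v} \<in> E \<longleftrightarrow> lo u \<le> hi v \<and> lo v \<le> hi u"
    using consecutive_clique_order_intervals[OF order] by blast
  have distinct: "distinct Cs" and set_Cs: "set Cs = {C. max_clique n E C}"
    using order unfolding consecutive_clique_order_def by blast+
  have index: "\<exists>j<length Cs. Cs ! j = C" if "max_clique n E C" for C
  proof -
    from that set_Cs have "C \<in> set Cs" by simp
    then show ?thesis by (simp add: in_set_conv_nth)
  qed
  from common obtain D where D: "max_clique n E D" "x \<in> D" "y \<in> D"
    and D_unique: "\<And>C. max_clique n E C \<Longrightarrow> x \<in> C \<Longrightarrow> y \<in> C \<Longrightarrow> C = D" by blast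
  from max_clique_subset[OF D(1)] D(2,3) have x: "x \<in> {1..n}" and y: "y \<in> {1..n}" by blast+
  have "x \<noteq> y" using x_only by blast
  obtain m where m: "m < length Cs" "Cs ! m = D" using index[OF D(1)] by blast
  have "lo x \<le> j \<and> j \<le> hi x \<and> lo y \<le> j \<and> j \<le> hi y \<longleftrightarrow> j = m" for j
  proof
    assume j: "lo x \<le> j \<and> j \<le> hi x \<and> lo y \<le> j \<and> j \<le> hi y"
    with bounds[OF x] have "j < length Cs" by simp
    with j mem[OF x] mem[OF y] set_Cs have "Cs ! j = Cs ! m"
      using D_unique m(2) by (metis mem_Collect_eq nth_mem)
    with distinct \<open>j < length Cs\<close> m(1) show "j = m" by (simp add: nth_eq_iff_index_eq)
  qed (use mem[OF x m(1)] mem[OF y m(1)] m(2) D in auto)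
  moreover obtain jx where "jx < length Cs" "x \<in> Cs ! jx" "y \<notin> Cs ! jx"
    using x_only index by blast
  moreover obtain jy where "jy < length Cs" "y \<in> Cs ! jy" "x \<notin> Cs ! jy"
    using y_only index by blast
  ultimately have touching: "hi x = lo y \<or> hi y = lo x"
    using mem[OF x] mem[OF y] by (intro nat_intervals_touch) auto
  have lo_hi: "\<forall>v\<in>{1..n}. lo v \<le> hi v" using bounds by blast
  have intervals: "\<forall>u\<in>{1..n}. \<forall>v\<in>{1..n}. u \<noteq> v \<longrightarrow> ({u, v} \<in> E \<longleftrightarrow> lo u \<le> hi v \<and> lo v \<le> hi u)"
    using edges by blast
  have "interval_graph n (E - {{x, y}})"
    using touching
  proof
    assume "hi x = lo y"
    then show ?thesis by (rule interval_graph_remove_touching_edge[OF assms(1) lo_hi intervals \<open>x \<noteq> y\<close>])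
  next
    assume "hi y = lo x"
    from interval_graph_remove_touching_edge[OF assms(1) lo_hi intervals _ this] \<open>x \<noteq> y\<close>
    show ?thesis by (simp add: insert_commute)
  qed
  moreover have "{x, y} \<in> E" using edge_iff_in_max_clique[OF \<open>x \<noteq> y\<close> x y] D by blast
  ultimately show ?thesis by (simp add: interval_edge_def)
qed

section \<open>Two vertices of a Q-node\<close>

lemma reord_refl: "reord t t"
proof (induction t)
  case (PNode S cs)
  show ?case by (rule reord_P[where ds = cs]) (auto simp: PNode.IH)
next
  case (QNode ps)
  have "reord c c" if "i < length ps" "snd (ps ! i) = Some c" for i c
    using QNode.IH[of "ps ! i" "Some c" c] that by (simp add: snds_iff)
  then show ?case
    by (intro reord_Q[where qs = ps]) (metis option.exhaust)+
qed

lemma mpq_tree_consecutive_clique_order: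
  assumes "mpq_tree n E T"
  shows "consecutive_clique_order n E (cliques T)"
proof -
  have "cliques T \<in> {cliques T' | T'. reord T T'}" using reord_refl by blast
  with assms show ?thesis unfolding mpq_tree_def by blast
qed

lemma mpq_tree_nodes_ok: "mpq_tree n E T \<Longrightarrow> nodes_ok T"
  by (simp add: mpq_tree_def nodes_ok_def)

lemma QNode_other_section:
  assumes "node_ok (QNode ps)" "i < length ps" "x \<in> fst (ps ! i)"
  obtains j where "j < length ps" "j \<noteq> i" "x \<in> fst (ps ! j)"
proof -
  have "\<forall>v\<in>(\<Union>k<length ps. fst (ps ! k)). \<exists>l r. l < r \<and> r < length ps \<and>
      (\<forall>j<length ps. v \<in> fst (ps ! j) \<longleftrightarrow> l \<le> j \<and> j \<le> r)"
    using assms(1) by (simp add: Let_def)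
  moreover have "x \<in> (\<Union>k<length ps. fst (ps ! k))" using assms(2,3) by blast
  ultimately obtain l r where "l < r" "r < length ps"
      and sections: "\<forall>j<length ps. x \<in> fst (ps ! j) \<longleftrightarrow> l \<le> j \<and> j \<le> r"
    by blast
  with assms(2,3) show thesis
    by (intro that[of "if i = l then r else l"]) auto
qed

lemma max_cliques_through_QNode:
  assumes "mpq_tree n E T" "subtree T q = Some (QNode ps)"
  obtains A where "\<And>C. C \<in> set (cliques (QNode ps)) \<Longrightarrow> max_clique n E (A \<union> C)"
    and "\<And>C v. max_clique n E C \<Longrightarrow> v \<in> C \<Longrightarrow> v \<in> own (QNode ps) \<Longrightarrow>
           \<exists>C'\<in>set (cliques (QNode ps)). C = A \<union> C'"
    and "\<And>v. v \<in> own (QNode ps) \<Longrightarrow> v \<notin> A"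
    and "\<And>v k. v \<in> own (QNode ps) \<Longrightarrow> k < length ps \<Longrightarrow> v \<notin> subvs (snd (ps ! k))"
proof -
  have set_cliques: "set (cliques T) = {C. max_clique n E C}" using assms(1) by (simp add: mpq_tree_def)
  have pinned: "owner_paths T v = {q}" if "v \<in> own (QNode ps)" for v
  proof -
    from assms(2) that own_subset_vset vset_subtree_subset have "v \<in> vset T" by blast
    with assms(1) have "\<exists>!p. \<exists>t. subtree T p = Some t \<and> v \<in> own t" by (simp add: mpq_tree_def)
    with assms(2) that show ?thesis unfolding owner_paths_def by blast
  qed
  obtain A where A_away: "\<And>v. v \<in> A \<Longrightarrow> \<not> owner_paths T v \<subseteq> {q}"
    and A_ext: "\<And>C'. C' \<in> set (cliques (QNode ps)) \<Longrightarrow> A \<union> C' \<in> set (cliques T)"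
    and A_all: "\<And>C v. C \<in> set (cliques T) \<Longrightarrow> v \<in> C \<Longrightarrow> owner_paths T v \<subseteq> {q} \<Longrightarrow>
           \<exists>C'\<in>set (cliques (QNode ps)). C = A \<union> C'"
    using cliques_through_path[OF assms(2)] by blast
  show thesis
  proof (rule that)
    show "max_clique n E (A \<union> C)" if "C \<in> set (cliques (QNode ps))" for C
      using A_ext[OF that] set_cliques by blast
    show "\<exists>C'\<in>set (cliques (QNode ps)). C = A \<union> C'"
      if "max_clique n E C" "v \<in> C" "v \<in> own (QNode ps)" for C v
      using A_all[of C v] that pinned set_cliques by blast
    show "v \<notin> A" if "v \<in> own (QNode ps)" for v
      using A_away pinned[OF that] by blast
    show "v \<notin> subvs (snd (ps ! k))" if "v \<in> own (QNode ps)" "k < length ps" for v k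
    proof
      assume "v \<in> subvs (snd (ps ! k))"
      then obtain c where "snd (ps ! k) = Some c" "v \<in> vset c" by (auto simp: subvs_def split: option.splits)
      with assms(2) that(2) have "subtree T (q @ [k]) = Some c" "v \<in> vset c"
        by (simp_all add: subtree_append)
      then obtain p where "(q @ [k]) @ p \<in> owner_paths T v" by (rule owner_paths_below)
      with pinned[OF that(1)] show False by simp
    qed
  qed
qed

lemma QNode_private_max_clique:
  assumes "mpq_tree n E T" "subtree T q = Some (QNode ps)"
    and "i < length ps" "x \<in> fst (ps ! i)" "y \<in> own (QNode ps)"
    and "\<forall>j<length ps. j \<noteq> i \<longrightarrow> \<not> (x \<in> fst (ps ! j) \<and> y \<in> fst (ps ! j))"
  shows "\<exists>C. max_clique n E C \<and> x \<in> C \<and> y \<notin> C"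
proof -
  obtain A where A_max: "\<And>C. C \<in> set (cliques (QNode ps)) \<Longrightarrow> max_clique n E (A \<union> C)"
    and y_A: "y \<notin> A" and y_below: "\<And>k. k < length ps \<Longrightarrow> y \<notin> subvs (snd (ps ! k))"
    using max_cliques_through_QNode[OF assms(1,2)] assms(5) by metis
  have ok: "nodes_ok (QNode ps)" using nodes_ok_subtree[OF mpq_tree_nodes_ok[OF assms(1)] assms(2)] .
  obtain j where j: "j < length ps" "j \<noteq> i" "x \<in> fst (ps ! j)"
    using QNode_other_section[OF nodes_ok_node_ok[OF ok] assms(3,4)] .
  obtain K where K: "K \<in> set (cliques (QNode ps))" "x \<in> K" "K \<subseteq> fst (ps ! j) \<union> subvs (snd (ps ! j))"
    using QNode_clique_through[OF ok j(1), of x] j(3) by blast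
  have "y \<notin> K" using K(3) assms(6) j y_below[OF j(1)] by blast
  with A_max[OF K(1)] K(2) y_A show ?thesis by blast
qed

lemma QNode_unique_common_max_clique:
  assumes "mpq_tree n E T" "subtree T q = Some (QNode ps)"
    and "i < length ps" "x \<in> fst (ps ! i)" "y \<in> fst (ps ! i)"
    and only_i: "\<forall>j<length ps. j \<noteq> i \<longrightarrow> \<not> (x \<in> fst (ps ! j) \<and> y \<in> fst (ps ! j))"
    and "is_clique n E (subvs (snd (ps ! i)))"
  shows "\<exists>!C. max_clique n E C \<and> x \<in> C \<and> y \<in> C"
proof -
  let ?S = "fst (ps ! i)" and ?V = "subvs (snd (ps ! i))"
  have own: "x \<in> own (QNode ps)" "y \<in> own (QNode ps)" using assms(3-5) by (auto dest: nth_mem)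
  obtain A where A_max: "\<And>C. C \<in> set (cliques (QNode ps)) \<Longrightarrow> max_clique n E (A \<union> C)"
    and A_all: "\<And>C v. max_clique n E C \<Longrightarrow> v \<in> C \<Longrightarrow> v \<in> own (QNode ps) \<Longrightarrow>
           \<exists>C'\<in>set (cliques (QNode ps)). C = A \<union> C'"
    and A_own: "\<And>v. v \<in> own (QNode ps) \<Longrightarrow> v \<notin> A"
    and below: "\<And>v k. v \<in> own (QNode ps) \<Longrightarrow> k < length ps \<Longrightarrow> v \<notin> subvs (snd (ps ! k))"
    using max_cliques_through_QNode[OF assms(1,2)] by metis
  have ok: "nodes_ok (QNode ps)" using nodes_ok_subtree[OF mpq_tree_nodes_ok[OF assms(1)] assms(2)] .
  define D where "D = A \<union> ?S \<union> ?V"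
  have through: "\<exists>K\<in>set (cliques (QNode ps)). w \<in> A \<union> K \<and> A \<union> ?S \<subseteq> A \<union> K \<and> A \<union> K \<subseteq> D"
    if w: "w \<in> D" for w
  proof -
    have "x \<in> ?S \<union> ?V" "w \<notin> A \<Longrightarrow> w \<in> ?S \<union> ?V" using assms(4) w unfolding D_def by auto
    then obtain K where "K \<in> set (cliques (QNode ps))" "w \<in> A \<union> K" "?S \<subseteq> K" "K \<subseteq> ?S \<union> ?V"
      using QNode_clique_through[OF ok assms(3)] by (metis UnCI)
    then show ?thesis unfolding D_def by blast
  qed
  have "is_clique n E D"
  proof (rule is_clique_if_cliques_cover[OF assms(7)])
    fix w assume "w \<in> D"
    then obtain K where "K \<in> set (cliques (QNode ps))" "w \<in> A \<union> K" "A \<union> ?S \<subseteq> A \<union> K"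
      using through by blast
    moreover have "D - ?V \<subseteq> A \<union> ?S" unfolding D_def by blast
    ultimately show "\<exists>K. is_clique n E K \<and> w \<in> K \<and> D - ?V \<subseteq> K"
      using A_max by (blast dest: max_clique_is_clique)
  qed
  moreover obtain K where "K \<in> set (cliques (QNode ps))" "A \<union> K \<subseteq> D"
    using through[of x] assms(4) unfolding D_def by blast
  ultimately have "D = A \<union> K" using A_max max_clique_maximal by blast
  with \<open>K \<in> set (cliques (QNode ps))\<close> have D_max: "max_clique n E D" using A_max by simp
  moreover have "C = D" if C: "max_clique n E C" "x \<in> C" "y \<in> C" for C
  proof -
    obtain K where K: "K \<in> set (cliques (QNode ps))" "C = A \<union> K"
      using A_all[OF C(1,2) own(1)] by blast
    from K(1) obtain k where k: "k < length ps" "fst (ps ! k) \<subseteq> K"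
        "K \<subseteq> fst (ps ! k) \<union> subvs (snd (ps ! k))"
      by (rule QNode_clique_position)
    have "x \<in> fst (ps ! k)" "y \<in> fst (ps ! k)"
      using K k C(2,3) A_own[OF own(1)] A_own[OF own(2)] below[OF own(1) k(1)] below[OF own(2) k(1)] by blast+
    with only_i k(1) have "k = i" by blast
    with K k have "C \<subseteq> D" unfolding D_def by blast
    with C(1) \<open>is_clique n E D\<close> show ?thesis by (metis max_clique_maximal)
  qed
  ultimately show ?thesis using assms(4,5) unfolding D_def by blast
qed

theorem mainTheorem5:
  fixes n :: nat and E :: "nat set set" and T :: mpq
    and x y :: nat and q :: "nat list" and ps :: "(nat set \<times> mpq option) list" and i :: nat
  assumes "interval_graph n E"
    and "mpq_tree n E T"
    and "x \<noteq> y"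
    and "subtree T q = Some (QNode ps)"
    and "x \<in> own (QNode ps)" and "y \<in> own (QNode ps)"
    and "i < length ps"
    and "x \<in> fst (ps ! i)" and "y \<in> fst (ps ! i)"
    and "\<forall>j<length ps. j \<noteq> i \<longrightarrow> \<not> (x \<in> fst (ps ! j) \<and> y \<in> fst (ps ! j))"
    and "is_clique n E (subvs (snd (ps ! i)))"
  shows "interval_edge n E x y"
proof (rule interval_edge_if_unique_common_max_clique)
  show "simple_graph n E" using assms(1) by (simp add: interval_graph_def)
  show "consecutive_clique_order n E (cliques T)"
    using assms(2) by (rule mpq_tree_consecutive_clique_order)
  show "\<exists>!C. max_clique n E C \<and> x \<in> C \<and> y \<in> C"
    using QNode_unique_common_max_clique[OF assms(2,4,7,8,9,10,11)] .
  show "\<exists>C. max_clique n E C \<and> x \<in> C \<and> y \<notin> C"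
    using QNode_private_max_clique[OF assms(2,4,7,8,6,10)] .
  have "\<forall>j<length ps. j \<noteq> i \<longrightarrow> \<not> (y \<in> fst (ps ! j) \<and> x \<in> fst (ps ! j))"
    using assms(10) by blast
  then show "\<exists>C. max_clique n E C \<and> y \<in> C \<and> x \<notin> C"
    using QNode_private_max_clique[OF assms(2,4,7,9,5)] by blast
qed

end
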